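(* Let $\mathsf{K}$ be a finite simplicial complex whose vertex set is a finite set $P\subset\mathbb{R}^d$, let $v\in\mathbb{R}^d$, and let $\zeta_1\prec_v\cdots\prec_v\zeta_s$ be the essential $p$-cycles of the filtration $\mathcal{D}_v(\mathsf{K})$ computed by the standard reduction algorithm. Let $\zeta$ be a $p$-cycle with $[\zeta]\neq 0$ in $H_p(\mathsf{K})$ such that $\zeta=\zeta_{i_1}+\cdots+\zeta_{i_m}+\partial c_{p+1}$ for some $(p+1)$-chain $c_{p+1}$ and indices $i_1<\cdots<i_m$ in $\{1,\dots,s\}$. Then $r_v([\zeta])=r_v(\zeta_{i_m})$, where $r_v([\zeta]):=\min_{\xi\in[\zeta]} r_v(\xi)$. In particular, $\zeta_{i_1}+\cdots+\zeta_{i_m}\in\arg\min_{\xi\in[\zeta]} r_v(\xi)$.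
   Context: All homology is with $\mathbb{Z}_2$ coefficients; chains are identified with their supports (sets of simplices). For a simplex $\sigma$ of $\mathsf{K}$ and $v\in\mathbb{R}^d$, $r_v(\sigma)=\max_{x\text{ vertex of }\sigma}\|v-x\|_2$; for a nonzero chain $\zeta$, $r_v(\zeta)=\max_{\sigma\in\zeta}r_v(\sigma)$. The order $\prec_v$ is a fixed total order on the simplices of $\mathsf{K}$ such that $\sigma_1\prec_v\sigma_2$ whenever $\sigma_1$ is a proper face of $\sigma_2$ or $r_v(\sigma_1)<r_v(\sigma_2)$ (remaining ties broken arbitrarily). For a nonzero chain $\zeta$, $\kappa(\zeta)$ is the $\prec_v$-largest simplex in its support, and chains are compared by $\zeta\prec_v\zeta'$ iff $\kappa(\zeta)\prec_v\kappa(\zeta')$; note $r_v(\zeta)=r_v(\kappa(\zeta))$. $\mathcal{D}_v(\mathsf{K})$ is the simplexwise filtration adding the simplices $\sigma_1\prec_v\sigma_2\prec_v\cdots\prec_v\sigma_N$ one at a time. Standard reduction: let $\partial$ be the $N\times N$ $\mathbb{Z}_2$ boundary matrix (column $j$ is the boundary of $\sigma_j$, rows and columns in filtration order), $low(j)$ the row index of the lowest $1$ in column $j$ (undefined if the column is zero). Start with $V=I_N$; for $j=1,\dots,N$, while there is $j_0<j$ with $low(j_0)=low(j)$, add column $j_0$ to column $j$ of $\partial$ and column $j_0$ of $V$ to column $j$ of $V$. Let $R$ be the resulting reduced matrix. An index $i$ is paired if $i=low(j)$ for some nonzero column $R_j$, or if $R_i\neq0$. The essential $p$-cycles are the columns $V_i$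 (viewed as chains) for indices $i$ such that $\sigma_i$ is a $p$-simplex, $R_i=0$, and $i$ is not paired; each such $V_i$ is a cycle with $\kappa(V_i)=\sigma_i$, and their classes form a basis of $H_p(\mathsf{K})$. *)

theory Defs
  imports "HOL-Analysis.Analysis" "HOL-Library.While_Combinator"
begin

definition finite_abstract_complex :: "'a set set \<Rightarrow> bool" where
  "finite_abstract_complex K \<longleftrightarrow> finite K \<and> (\<forall>\<sigma>\<in>K. finite \<sigma> \<and> \<sigma> \<noteq> {})
     \<and> (\<forall>\<sigma>\<in>K. \<forall>\<tau>. \<tau> \<subseteq> \<sigma> \<and> \<tau> \<noteq> {} \<longrightarrow> \<tau> \<in> K)"

definition rv_simplex :: "'a::real_normed_vector \<Rightarrow> 'a set \<Rightarrow> real" where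
  "rv_simplex v \<sigma> = Max ((\<lambda>x. norm (v - x)) ` \<sigma>)"

definition rv_chain :: "'a::real_normed_vector \<Rightarrow> 'a set set \<Rightarrow> real" where
  "rv_chain v \<zeta> = Max (rv_simplex v ` \<zeta>)"

(* Z2-chains are identified with their supports *)
definition chain_add :: "'b set \<Rightarrow> 'b set \<Rightarrow> 'b set" where
  "chain_add a b = (a - b) \<union> (b - a)"

definition chain_sum :: "('i \<Rightarrow> 'b set) \<Rightarrow> 'i set \<Rightarrow> 'b set" where
  "chain_sum f S = {\<sigma>. odd (card {i\<in>S. \<sigma> \<in> f i})}"

definition is_facet :: "'a set \<Rightarrow> 'a set \<Rightarrow> bool" where
  "is_facet \<tau> \<sigma> \<longleftrightarrow> \<tau> \<subseteq> \<sigma> \<and> card \<sigma> = card \<tau> + 1"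

definition chain_boundary :: "'a set set \<Rightarrow> 'a set set \<Rightarrow> 'a set set" where
  "chain_boundary K c = {\<tau>\<in>K. odd (card {\<sigma>\<in>c. is_facet \<tau> \<sigma>})}"

definition p_chain :: "'a set set \<Rightarrow> nat \<Rightarrow> 'a set set \<Rightarrow> bool" where
  "p_chain K p c \<longleftrightarrow> c \<subseteq> K \<and> (\<forall>\<sigma>\<in>c. card \<sigma> = p + 1)"

definition is_cycle :: "'a set set \<Rightarrow> nat \<Rightarrow> 'a set set \<Rightarrow> bool" where
  "is_cycle K p \<zeta> \<longleftrightarrow> p_chain K p \<zeta> \<and> chain_boundary K \<zeta> = {}"

definition null_homologous :: "'a set set \<Rightarrow> nat \<Rightarrow> 'a set set \<Rightarrow> bool" where
  "null_homologous K p \<zeta> \<longleftrightarrow> (\<exists>c. p_chain K (p + 1) c \<and> \<zeta> = chain_boundary K c)"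

definition homology_class :: "'a set set \<Rightarrow> nat \<Rightarrow> 'a set set \<Rightarrow> 'a set set set" where
  "homology_class K p \<zeta> =
     {\<xi>. p_chain K p \<xi> \<and> (\<exists>c. p_chain K (p + 1) c \<and> \<xi> = chain_add \<zeta> (chain_boundary K c))}"

definition rv_class :: "'a::real_normed_vector set set \<Rightarrow> nat \<Rightarrow> 'a \<Rightarrow> 'a set set \<Rightarrow> real" where
  "rv_class K p v \<zeta> = Min (rv_chain v ` homology_class K p \<zeta>)"

(* the order \<prec>_v, given as the list sigma_1,...,sigma_N (0-based indices) *)
definition filtration_order :: "'a::real_normed_vector set set \<Rightarrow> 'a \<Rightarrow> 'a set list \<Rightarrow> bool" where
  "filtration_order K v ord \<longleftrightarrow> distinct ord \<and> set ord = K \<and>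
     (\<forall>i<length ord. \<forall>j<length ord.
        (ord ! i \<subset> ord ! j \<or> rv_simplex v (ord ! i) < rv_simplex v (ord ! j)) \<longrightarrow> i < j)"

(* Z2 matrices: column j is the set of row indices carrying a 1 *)
definition boundary_matrix :: "'a set list \<Rightarrow> nat \<Rightarrow> nat set" where
  "boundary_matrix ord j =
     (if j < length ord then {i. i < length ord \<and> is_facet (ord ! i) (ord ! j)} else {})"

definition low :: "nat set \<Rightarrow> nat" where
  "low c = Max c"

definition red_cond :: "nat \<Rightarrow> (nat \<Rightarrow> nat set) \<times> (nat \<Rightarrow> nat set) \<Rightarrow> bool" where
  "red_cond j st \<longleftrightarrow> (let R = fst st in
     R j \<noteq> {} \<and> (\<exists>j0<j. R j0 \<noteq> {} \<and> low (R j0) = low (R j)))"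

definition red_step :: "nat \<Rightarrow> (nat \<Rightarrow> nat set) \<times> (nat \<Rightarrow> nat set) \<Rightarrow> (nat \<Rightarrow> nat set) \<times> (nat \<Rightarrow> nat set)" where
  "red_step j st = (let R = fst st; V = snd st;
     j0 = (SOME j0. j0 < j \<and> R j0 \<noteq> {} \<and> low (R j0) = low (R j))
   in (R(j := chain_add (R j) (R j0)), V(j := chain_add (V j) (V j0))))"

definition reduce_column :: "nat \<Rightarrow> (nat \<Rightarrow> nat set) \<times> (nat \<Rightarrow> nat set) \<Rightarrow> (nat \<Rightarrow> nat set) \<times> (nat \<Rightarrow> nat set)" where
  "reduce_column j st = the (while_option (red_cond j) (red_step j) st)"

definition standard_reduction :: "nat \<Rightarrow> (nat \<Rightarrow> nat set) \<Rightarrow> (nat \<Rightarrow> nat set) \<times> (nat \<Rightarrow> nat set)" where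
  "standard_reduction N D = foldl (\<lambda>st j. reduce_column j st) (D, \<lambda>j. {j}) [0..<N]"

definition reduced_R :: "'a set list \<Rightarrow> nat \<Rightarrow> nat set" where
  "reduced_R ord = fst (standard_reduction (length ord) (boundary_matrix ord))"

definition reduced_V :: "'a set list \<Rightarrow> nat \<Rightarrow> nat set" where
  "reduced_V ord = snd (standard_reduction (length ord) (boundary_matrix ord))"

definition paired :: "'a set list \<Rightarrow> nat \<Rightarrow> bool" where
  "paired ord i \<longleftrightarrow> (\<exists>j<length ord. reduced_R ord j \<noteq> {} \<and> low (reduced_R ord j) = i)
                      \<or> reduced_R ord i \<noteq> {}"

definition essential_indices :: "'a set list \<Rightarrow> nat \<Rightarrow> nat set" where
  "essential_indices ord p = {i. i < length ord \<and> card (ord ! i) = p + 1 \<and>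
                                 reduced_R ord i = {} \<and> \<not> paired ord i}"

definition essential_cycle :: "'a set list \<Rightarrow> nat \<Rightarrow> 'a set set" where
  "essential_cycle ord i = (\<lambda>k. ord ! k) ` reduced_V ord i"

end

(* Let Sigma be the sum of the essential cycles V_i, i in S, and m = Max S. Since the
   reduction matrix V is unitriangular, Sigma contains sigma_m and otherwise only simplices
   sigma_k with k < m, so r_v(Sigma) = r_v(sigma_m) = r_v(V_m) by monotonicity of r_v along
   the filtration. Any other representative of the class is Sigma + boundary(b). As V is
   invertible, boundary(b) is a sum of columns of R = boundary * V, whose nonzero columns have
   distinct pivots, so the last index of that sum is the pivot of one of its columns. If
   Sigma + boundary(b) contained no sigma_k with k >= m, this last index would be m, and m
   would be paired. Hence every representative has radius at least r_v(sigma_m). *)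

theory Submission
  imports Defs
begin

section \<open>Chains over Z/2 as sets\<close>

lemma chain_sum_empty [simp]: "chain_sum f {} = {}"
  by (simp add: chain_sum_def)

lemma chain_sum_singleton [simp]: "chain_sum f {i} = f i"
proof -
  have "{j\<in>{i}. x \<in> f j} = (if x \<in> f i then {i} else {})" for x
    by auto
  then show ?thesis
    by (auto simp: chain_sum_def)
qed

lemma chain_sum_subset_Union: "chain_sum f S \<subseteq> \<Union> (f ` S)"
proof
  fix x
  assume "x \<in> chain_sum f S"
  then have "odd (card {i\<in>S. x \<in> f i})"
    by (simp add: chain_sum_def)
  then have "{i\<in>S. x \<in> f i} \<noteq> {}"
    by (metis card.empty even_zero)
  then show "x \<in> \<Union> (f ` S)"
    by blast
qed

lemma chain_sum_subset: "(\<And>i. i \<in> S \<Longrightarrow> f i \<subseteq> A) \<Longrightarrow> chain_sum f S \<subseteq> A"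
  by (rule order_trans[OF chain_sum_subset_Union UN_least])

lemma chain_sum_cong: "(\<And>i. i \<in> S \<Longrightarrow> f i = g i) \<Longrightarrow> chain_sum f S = chain_sum g S"
proof -
  assume "\<And>i. i \<in> S \<Longrightarrow> f i = g i"
  then have "{i\<in>S. x \<in> f i} = {i\<in>S. x \<in> g i}" for x
    by auto
  then show ?thesis
    by (simp add: chain_sum_def)
qed

lemma chain_sum_nonempty: "chain_sum f {i\<in>S. f i \<noteq> {}} = chain_sum f S"
proof -
  have "{i\<in>{i\<in>S. f i \<noteq> {}}. x \<in> f i} = {i\<in>S. x \<in> f i}" for x
    by auto
  then show ?thesis
    by (simp add: chain_sum_def)
qed

lemma chain_sum_chain_add:
  assumes "finite A" "finite B"
  shows "chain_sum f (chain_add A B) = chain_add (chain_sum f A) (chain_sum f B)"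
proof -
  have "odd (card {i\<in>chain_add A B. x \<in> f i}) \<longleftrightarrow>
        odd (card {i\<in>A. x \<in> f i}) \<noteq> odd (card {i\<in>B. x \<in> f i})" for x
  proof -
    let ?F = "\<lambda>X. {i\<in>X. x \<in> f i}"
    have "card (?F A) = card (?F (A - B)) + card (?F (A \<inter> B))"
      using assms by (subst card_Un_disjoint[symmetric]) (auto intro: arg_cong[where f = card])
    moreover have "card (?F B) = card (?F (B - A)) + card (?F (A \<inter> B))"
      using assms by (subst card_Un_disjoint[symmetric]) (auto intro: arg_cong[where f = card])
    moreover have "card (?F (chain_add A B)) = card (?F (A - B)) + card (?F (B - A))"
      using assms by (subst card_Un_disjoint[symmetric]) (auto simp: chain_add_def intro: arg_cong[where f = card])
    ultimately show ?thesis
      by auto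
  qed
  then show ?thesis
    by (auto simp: chain_sum_def chain_add_def)
qed

lemma chain_sum_insert:
  assumes "finite S" "i \<notin> S"
  shows "chain_sum f (insert i S) = chain_add (f i) (chain_sum f S)"
proof -
  have "insert i S = chain_add {i} S"
    using assms(2) by (auto simp: chain_add_def)
  then show ?thesis
    using assms(1) by (simp add: chain_sum_chain_add)
qed

lemma chain_sum_chain_sum:
  assumes "finite J" "\<And>j. j \<in> J \<Longrightarrow> finite (V j)"
  shows "chain_sum D (chain_sum V J) = chain_sum (\<lambda>j. chain_sum D (V j)) J"
  using assms
proof (induction J rule: finite_induct)
  case (insert j J)
  have "finite (chain_sum V J)"
    using insert.hyps(1) insert.prems by (blast intro: finite_subset[OF chain_sum_subset_Union])
  with insert show ?case
    by (simp add: chain_sum_insert chain_sum_chain_add)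
qed simp

lemma chain_sum_reindex:
  assumes "inj_on g S"
  shows "chain_sum f (g ` S) = chain_sum (f \<circ> g) S"
proof -
  have "{i\<in>g ` S. x \<in> f i} = g ` {j\<in>S. x \<in> f (g j)}" for x
    by auto
  moreover have "card (g ` {j\<in>S. x \<in> f (g j)}) = card {j\<in>S. x \<in> f (g j)}" for x
    using assms by (auto intro: card_image inj_on_subset)
  ultimately show ?thesis
    by (simp add: chain_sum_def)
qed

lemma chain_sum_Int: "chain_sum (\<lambda>i. A \<inter> f i) S = A \<inter> chain_sum f S"
proof -
  have "{i\<in>S. x \<in> A \<inter> f i} = (if x \<in> A then {i\<in>S. x \<in> f i} else {})" for x
    by auto
  then show ?thesis
    by (auto simp: chain_sum_def)
qed

lemma chain_sum_image:
  assumes "inj_on g U" "\<And>i. i \<in> S \<Longrightarrow> f i \<subseteq> U"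
  shows "chain_sum (\<lambda>i. g ` f i) S = g ` chain_sum f S"
proof -
  have "g k \<in> chain_sum (\<lambda>i. g ` f i) S \<longleftrightarrow> k \<in> chain_sum f S" if "k \<in> U" for k
  proof -
    have "{i\<in>S. g k \<in> g ` f i} = {i\<in>S. k \<in> f i}"
      using inj_on_image_mem_iff[OF assms(1) that assms(2)] by auto
    then show ?thesis
      by (simp add: chain_sum_def)
  qed
  moreover have "chain_sum (\<lambda>i. g ` f i) S \<subseteq> g ` U"
    using assms(2) by (intro chain_sum_subset image_mono)
  moreover have "chain_sum f S \<subseteq> U"
    using assms(2) by (rule chain_sum_subset)
  ultimately show ?thesis
    by blast
qed

lemma chain_add_image:
  assumes "inj_on g U" "A \<subseteq> U" "B \<subseteq> U"
  shows "chain_add (g ` A) (g ` B) = g ` chain_add A B"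
  using inj_on_image_set_diff[OF assms(1)] assms(2,3) by (auto simp: chain_add_def)

lemma chain_boundary_conv_chain_sum: "chain_boundary K c = K \<inter> chain_sum (\<lambda>\<sigma>. {\<tau>. is_facet \<tau> \<sigma>}) c"
  by (auto simp: chain_boundary_def chain_sum_def)

lemma chain_boundary_chain_add:
  "finite a \<Longrightarrow> finite b \<Longrightarrow>
    chain_boundary K (chain_add a b) = chain_add (chain_boundary K a) (chain_boundary K b)"
  unfolding chain_boundary_conv_chain_sum by (simp add: chain_sum_chain_add) (auto simp: chain_add_def)

lemma p_chain_chain_add: "p_chain K p a \<Longrightarrow> p_chain K p b \<Longrightarrow> p_chain K p (chain_add a b)"
  by (auto simp: p_chain_def chain_add_def)

lemma p_chain_chain_boundary:
  assumes "p_chain K (p + 1) c"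
  shows "p_chain K p (chain_boundary K c)"
  unfolding p_chain_def
proof (intro conjI ballI)
  show "chain_boundary K c \<subseteq> K"
    by (auto simp: chain_boundary_def)
next
  fix \<tau>
  assume "\<tau> \<in> chain_boundary K c"
  then obtain \<sigma> where "\<sigma> \<in> c" "is_facet \<tau> \<sigma>"
    using chain_sum_subset_Union[of "\<lambda>\<sigma>. {\<tau>. is_facet \<tau> \<sigma>}" c] unfolding chain_boundary_conv_chain_sum by blast
  then show "card \<tau> = p + 1"
    using assms by (auto simp: p_chain_def is_facet_def)
qed

section \<open>The standard reduction\<close>

definition unitriangular :: "(nat \<Rightarrow> nat set) \<Rightarrow> bool" where
  "unitriangular V \<longleftrightarrow> (\<forall>i. i \<in> V i \<and> V i \<subseteq> {..i})"

lemma unitriangular_finite: "unitriangular V \<Longrightarrow> finite (V i)"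
  unfolding unitriangular_def by (meson finite_atMost finite_subset)

lemma unitriangular_chain_sum_Max:
  assumes "unitriangular V" "finite S" "S \<noteq> {}"
  shows "Max S \<in> chain_sum V S" and "chain_sum V S \<subseteq> {..Max S}"
proof -
  have top: "i \<in> S \<Longrightarrow> Max S \<in> V i \<longleftrightarrow> i = Max S" for i
    using assms unfolding unitriangular_def by (meson Max_ge atMost_iff le_antisym subsetD)
  moreover have "Max S \<in> S"
    using assms(2,3) by simp
  ultimately have "{i\<in>S. Max S \<in> V i} = {Max S}"
    by auto
  then show "Max S \<in> chain_sum V S"
    by (simp add: chain_sum_def)
  show "chain_sum V S \<subseteq> {..Max S}"
    using assms unfolding unitriangular_def by (intro chain_sum_subset) (meson Max_ge atMost_subset_iff order_trans)
qed

lemma unitriangular_chain_sum_onto: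
  assumes "unitriangular V" "B \<subseteq> {..<n}"
  shows "\<exists>J\<subseteq>{..<n}. chain_sum V J = B"
  using assms(2)
proof (induction n arbitrary: B)
  case 0
  then show ?case
    by auto
next
  case (Suc n)
  show ?case
  proof (cases "n \<in> B")
    case False
    with Suc.prems have "B \<subseteq> {..<n}"
      by (auto simp: less_Suc_eq)
    then obtain J where "J \<subseteq> {..<n}" "chain_sum V J = B"
      using Suc.IH by blast
    then show ?thesis
      by (intro exI[of _ J]) auto
  next
    case True
    have "x < n" if "x \<in> chain_add B (V n)" for x
    proof -
      have "x \<le> n" "x \<noteq> n"
        using that Suc.prems True assms(1) by (auto simp: unitriangular_def chain_add_def)
      then show ?thesis
        by simp
    qed
    then obtain J where J: "J \<subseteq> {..<n}" "chain_sum V J = chain_add B (V n)"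
      using Suc.IH by blast
    have "chain_sum V (insert n J) = chain_add (V n) (chain_add B (V n))"
      using J finite_subset[OF J(1)] by (subst chain_sum_insert) auto
    also have "\<dots> = B"
      by (auto simp: chain_add_def)
    finally show ?thesis
      using J(1) by (intro exI[of _ "insert n J"]) auto
  qed
qed

lemma low_chain_add_less:
  assumes "finite A" "finite B" "A \<noteq> {}" "B \<noteq> {}" "low A = low B"
  shows "chain_add A B \<subseteq> {..<low A}"
proof -
  have "low A \<in> A" "low A \<in> B" "\<forall>x\<in>A \<union> B. x \<le> low A"
    using assms Max_in[of A] Max_in[of B] Max_ge[of A] Max_ge[of B] unfolding low_def by auto
  then show ?thesis
    by (auto simp: chain_add_def order.order_iff_strict)
qed

lemma low_chain_sum:
  assumes "finite J" "\<And>j. j \<in> J \<Longrightarrow> finite (R j)"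
    and "inj_on (\<lambda>j. low (R j)) {j\<in>J. R j \<noteq> {}}" and "chain_sum R J \<noteq> {}"
  shows "\<exists>j\<in>J. R j \<noteq> {} \<and> low (chain_sum R J) = low (R j)"
proof -
  define J' where "J' = {j\<in>J. R j \<noteq> {}}"
  have sum_J': "chain_sum R J = chain_sum R J'"
    unfolding J'_def by (rule chain_sum_nonempty[symmetric])
  have "finite J'"
    using assms(1) by (simp add: J'_def)
  have "J' \<noteq> {}"
    using assms(4) sum_J' by force
  define l where "l = Max ((\<lambda>j. low (R j)) ` J')"
  have "l \<in> (\<lambda>j. low (R j)) ` J'"
    unfolding l_def using \<open>finite J'\<close> \<open>J' \<noteq> {}\<close> by (intro Max_in) auto
  then obtain js where js: "js \<in> J'" "low (R js) = l"
    by auto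
  have in_column: "x \<le> low (R j)" if "j \<in> J'" "x \<in> R j" for j x
    unfolding low_def using that assms(2) by (intro Max_ge) (auto simp: J'_def)
  have column_below: "low (R j) \<le> l" if "j \<in> J'" for j
    unfolding l_def using \<open>finite J'\<close> that by (intro Max_ge) auto
  have "{j\<in>J'. l \<in> R j} = {js}"
  proof -
    have "low (R j) = l" if "j \<in> J'" "l \<in> R j" for j
      using in_column[OF that] column_below[OF that(1)] by simp
    then have "j = js" if "j \<in> J'" "l \<in> R j" for j
      using that js assms(3) unfolding J'_def inj_on_def by blast
    moreover have "l \<in> R js"
      using js assms(2) unfolding J'_def low_def by (auto intro: Max_in)
    ultimately show ?thesis
      using js(1) by blast
  qed
  then have "l \<in> chain_sum R J"
    unfolding sum_J' by (simp add: chain_sum_def)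
  moreover have "x \<le> l" if x: "x \<in> chain_sum R J" for x
  proof -
    obtain j where "j \<in> J'" "x \<in> R j"
      using x chain_sum_subset_Union[of R J'] unfolding sum_J' by blast
    then show ?thesis
      using in_column column_below order_trans by blast
  qed
  moreover have "finite (chain_sum R J)"
    using assms(1,2) by (blast intro: finite_subset[OF chain_sum_subset_Union])
  ultimately have "low (chain_sum R J) = l"
    unfolding low_def by (intro Max_eqI)
  with js show ?thesis
    unfolding J'_def by auto
qed

definition reduction_invariant ::
    "(nat \<Rightarrow> nat set) \<Rightarrow> nat \<Rightarrow> (nat \<Rightarrow> nat set) \<Rightarrow> (nat \<Rightarrow> nat set) \<Rightarrow> bool" where
  "reduction_invariant D n R V \<longleftrightarrow> (\<forall>i. finite (R i)) \<and> unitriangular V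
     \<and> (\<forall>i. R i = chain_sum D (V i)) \<and> inj_on (\<lambda>j. low (R j)) {j. j < n \<and> R j \<noteq> {}}"

lemma inj_on_low_fun_upd:
  fixes j :: nat
  assumes "inj_on (\<lambda>i. low (R i)) {i. i < j \<and> R i \<noteq> {}}"
  shows "inj_on (\<lambda>i. low ((R(j := X)) i)) {i. i < j \<and> (R(j := X)) i \<noteq> {}}"
proof -
  have "{i. i < j \<and> (R(j := X)) i \<noteq> {}} = {i. i < j \<and> R i \<noteq> {}}"
    by auto
  then show ?thesis
    using inj_on_cong[of "{i. i < j \<and> R i \<noteq> {}}" "\<lambda>i. low (R i)" "\<lambda>i. low ((R(j := X)) i)"] assms
    by simp
qed

lemma inj_on_low_Suc:
  assumes "inj_on (\<lambda>i. low (fst st i)) {i. i < j \<and> fst st i \<noteq> {}}" and "\<not> red_cond j st"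
  shows "inj_on (\<lambda>i. low (fst st i)) {i. i < Suc j \<and> fst st i \<noteq> {}}"
proof (cases "fst st j = {}")
  case True
  then have "{i. i < Suc j \<and> fst st i \<noteq> {}} = {i. i < j \<and> fst st i \<noteq> {}}"
    using less_Suc_eq by auto
  then show ?thesis
    using assms(1) by simp
next
  case False
  then have "{i. i < Suc j \<and> fst st i \<noteq> {}} = insert j {i. i < j \<and> fst st i \<noteq> {}}"
    using less_Suc_eq by auto
  moreover have "low (fst st j) \<notin> (\<lambda>i. low (fst st i)) ` {i. i < j \<and> fst st i \<noteq> {}}"
    using assms(2) False by (auto simp: red_cond_def Let_def)
  ultimately show ?thesis
    using assms(1) by simp
qed

lemma red_step_invariant:
  assumes inv: "reduction_invariant D j (fst st) (snd st)" and cond: "red_cond j st"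
  shows "reduction_invariant D j (fst (red_step j st)) (snd (red_step j st))"
    and "fst (red_step j st) j \<subseteq> {..<low (fst st j)}"
proof -
  obtain R V where st: "st = (R, V)"
    by fastforce
  define j0 where "j0 = (SOME j0. j0 < j \<and> R j0 \<noteq> {} \<and> low (R j0) = low (R j))"
  have "R j \<noteq> {}" "\<exists>j0<j. R j0 \<noteq> {} \<and> low (R j0) = low (R j)"
    using cond by (simp_all add: st red_cond_def)
  then have j0: "j0 < j" "R j0 \<noteq> {}" "low (R j0) = low (R j)"
    unfolding j0_def by (metis (mono_tags, lifting) someI_ex)+
  have step: "red_step j st = (R(j := chain_add (R j) (R j0)), V(j := chain_add (V j) (V j0)))"
    by (simp add: st red_step_def j0_def Let_def)
  have fin: "\<And>i. finite (R i)" and tri: "unitriangular V" and RV: "\<And>i. R i = chain_sum D (V i)"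
    and inj: "inj_on (\<lambda>j. low (R j)) {i. i < j \<and> R i \<noteq> {}}"
    using inv unfolding st reduction_invariant_def fst_conv snd_conv by blast+
  have "V j0 \<subseteq> {..j0}"
    using tri unfolding unitriangular_def by blast
  then have "j \<notin> V j0" "V j0 \<subseteq> {..j}"
    using j0(1) by auto
  then have tri': "unitriangular (V(j := chain_add (V j) (V j0)))"
    using tri unfolding unitriangular_def chain_add_def by auto
  have RV': "chain_add (R j) (R j0) = chain_sum D (chain_add (V j) (V j0))"
    using RV tri by (simp add: chain_sum_chain_add unitriangular_finite)
  show "reduction_invariant D j (fst (red_step j st)) (snd (red_step j st))"
    unfolding step reduction_invariant_def fst_conv snd_conv
  proof (intro conjI allI)
    show "finite ((R(j := chain_add (R j) (R j0))) i)" for i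
      using fin by (simp add: chain_add_def)
    show "(R(j := chain_add (R j) (R j0))) i = chain_sum D ((V(j := chain_add (V j) (V j0))) i)" for i
      using RV RV' by simp
  qed (fact tri', rule inj_on_low_fun_upd[OF inj])
  show "fst (red_step j st) j \<subseteq> {..<low (fst st j)}"
    using low_chain_add_less[OF fin fin \<open>R j \<noteq> {}\<close> j0(2) j0(3)[symmetric]]
    unfolding step by (simp add: st)
qed

lemma reduce_column_invariant:
  assumes "reduction_invariant D j (fst st) (snd st)"
  shows "reduction_invariant D (Suc j) (fst (reduce_column j st)) (snd (reduce_column j st))"
proof -
  let ?P = "\<lambda>st. reduction_invariant D j (fst st) (snd st)"
  let ?pivot = "\<lambda>st. if fst st j = {} then 0 else Suc (low (fst st j))"
  have step: "?P (red_step j st) \<and> ?pivot (red_step j st) < ?pivot st" if "?P st" "red_cond j st" for st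
  proof -
    have "finite (fst (red_step j st) j)"
      using red_step_invariant(1)[OF that] unfolding reduction_invariant_def by blast
    then have "fst (red_step j st) j = {} \<or> low (fst (red_step j st) j) < low (fst st j)"
      using red_step_invariant(2)[OF that] Max_in unfolding low_def by blast
    then show ?thesis
      using red_step_invariant(1)[OF that] that(2) by (auto simp: red_cond_def Let_def)
  qed
  have "\<exists>t. while_option (red_cond j) (red_step j) st = Some t"
    by (rule measure_while_option_Some[where P = ?P and f = ?pivot]) (use step assms in blast)+
  then obtain t where t: "while_option (red_cond j) (red_step j) st = Some t" ..
  have "?P t"
    by (rule while_option_rule[where P = ?P, OF _ t]) (use step assms in blast)+
  have "\<not> red_cond j t"
    using while_option_stop[OF t] .
  have inj_t: "inj_on (\<lambda>i. low (fst t i)) {i. i < j \<and> fst t i \<noteq> {}}"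
    using \<open>?P t\<close> unfolding reduction_invariant_def by blast
  have "inj_on (\<lambda>i. low (fst t i)) {i. i < Suc j \<and> fst t i \<noteq> {}}"
    using inj_on_low_Suc[OF inj_t \<open>\<not> red_cond j t\<close>] .
  then have "reduction_invariant D (Suc j) (fst t) (snd t)"
    using \<open>?P t\<close> unfolding reduction_invariant_def by argo
  then show ?thesis
    by (simp add: reduce_column_def t)
qed

lemma standard_reduction_invariant:
  assumes "\<And>i. finite (D i)"
  shows "reduction_invariant D n (fst (standard_reduction n D)) (snd (standard_reduction n D))"
proof (induction n)
  case 0
  show ?case
    using assms by (simp add: standard_reduction_def reduction_invariant_def unitriangular_def)
next
  case (Suc n)
  then show ?case
    by (simp add: standard_reduction_def reduce_column_invariant)
qed

lemma reduced_matrices_invariant: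
  "reduction_invariant (boundary_matrix ord) (length ord) (reduced_R ord) (reduced_V ord)"
  unfolding reduced_R_def reduced_V_def
  by (rule standard_reduction_invariant) (simp add: boundary_matrix_def)

lemma unitriangular_reduced_V: "unitriangular (reduced_V ord)"
  using reduced_matrices_invariant unfolding reduction_invariant_def by blast

lemma reduced_V_subset:
  assumes "i < length ord"
  shows "reduced_V ord i \<subseteq> {..<length ord}"
proof -
  have "reduced_V ord i \<subseteq> {..i}"
    using unitriangular_reduced_V unfolding unitriangular_def by blast
  with assms show ?thesis
    by auto
qed

lemma unpaired_top_not_cancelled:
  assumes inv: "reduction_invariant D N R V" and B: "B \<subseteq> {..<N}" and S: "finite S" "S \<noteq> {}"
    and unpaired: "\<forall>j<N. R j \<noteq> {} \<longrightarrow> low (R j) \<noteq> Max S"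
  shows "\<exists>k\<in>chain_add (chain_sum V S) (chain_sum D B). Max S \<le> k"
proof (rule ccontr)
  let ?Z = "chain_sum V S" and ?X = "chain_add (chain_sum V S) (chain_sum D B)"
  assume "\<not> ?thesis"
  then have X_below: "k < Max S" if "k \<in> ?X" for k
    using that by auto
  have tri: "unitriangular V" and fin: "\<And>i. finite (R i)" and RV: "\<And>i. R i = chain_sum D (V i)"
    and inj: "inj_on (\<lambda>j. low (R j)) {j. j < N \<and> R j \<noteq> {}}"
    using inv unfolding reduction_invariant_def by blast+
  obtain J where J: "J \<subseteq> {..<N}" "chain_sum V J = B"
    using unitriangular_chain_sum_onto[OF tri B] by blast
  have "finite J"
    using J(1) finite_subset by blast
  then have "chain_sum D B = chain_sum R J"
    unfolding J(2)[symmetric] RV using tri by (simp add: chain_sum_chain_sum unitriangular_finite)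
  then have sum_eq: "chain_sum R J = chain_add ?X ?Z"
    by (auto simp: chain_add_def)
  have "Max S \<in> chain_sum R J" "chain_sum R J \<subseteq> {..Max S}"
    using unitriangular_chain_sum_Max[OF tri S] X_below unfolding sum_eq chain_add_def by fastforce+
  then have "low (chain_sum R J) = Max S"
    unfolding low_def by (intro Max_eqI) (auto intro: finite_subset)
  moreover obtain j where "j \<in> J" "R j \<noteq> {}" "low (chain_sum R J) = low (R j)"
  proof -
    have "inj_on (\<lambda>j. low (R j)) {j\<in>J. R j \<noteq> {}}"
      using J(1) by (auto intro: inj_on_subset[OF inj])
    moreover have "chain_sum R J \<noteq> {}"
      using \<open>Max S \<in> chain_sum R J\<close> by blast
    ultimately show ?thesis
      using low_chain_sum[of J R] \<open>finite J\<close> fin that by blast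
  qed
  ultimately show False
    using unpaired J(1) by auto
qed

section \<open>From indices to simplices\<close>

lemma set_eq_nth_image: "set xs = (!) xs ` {..<length xs}"
  by (auto simp: in_set_conv_nth)

lemma chain_boundary_nth_image:
  assumes "distinct ord" "C \<subseteq> {..<length ord}"
  shows "chain_boundary (set ord) ((!) ord ` C) = (!) ord ` chain_sum (boundary_matrix ord) C"
proof -
  have inj: "inj_on ((!) ord) {..<length ord}"
    using assms(1) by (simp add: inj_on_nth)
  have "chain_boundary (set ord) ((!) ord ` C) = chain_sum (\<lambda>j. set ord \<inter> {\<tau>. is_facet \<tau> (ord ! j)}) C"
    using inj_on_subset[OF inj assms(2)]
    by (simp add: chain_boundary_conv_chain_sum chain_sum_reindex chain_sum_Int comp_def)
  also have "\<dots> = chain_sum (\<lambda>j. (!) ord ` boundary_matrix ord j) C"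
    using assms(2) by (intro chain_sum_cong) (auto simp: boundary_matrix_def in_set_conv_nth)
  also have "\<dots> = (!) ord ` chain_sum (boundary_matrix ord) C"
    by (rule chain_sum_image[OF inj]) (auto simp: boundary_matrix_def)
  finally show ?thesis .
qed

lemma essential_cycle_chain_sum:
  assumes "distinct ord" "S \<subseteq> {..<length ord}"
  shows "chain_sum (essential_cycle ord) S = (!) ord ` chain_sum (reduced_V ord) S"
  unfolding essential_cycle_def
proof (rule chain_sum_image)
  show "inj_on ((!) ord) {..<length ord}"
    using assms(1) by (simp add: inj_on_nth)
  show "reduced_V ord i \<subseteq> {..<length ord}" if "i \<in> S" for i
    using that assms(2) by (intro reduced_V_subset) blast
qed

lemma essential_cycle_sum_add_boundary_nth_image:
  assumes "distinct ord" "S \<subseteq> {..<length ord}" "B \<subseteq> {..<length ord}"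
  shows "chain_add (chain_sum (essential_cycle ord) S) (chain_boundary (set ord) ((!) ord ` B))
      = (!) ord ` chain_add (chain_sum (reduced_V ord) S) (chain_sum (boundary_matrix ord) B)"
    and "chain_add (chain_sum (reduced_V ord) S) (chain_sum (boundary_matrix ord) B) \<subseteq> {..<length ord}"
proof -
  have Z: "chain_sum (reduced_V ord) S \<subseteq> {..<length ord}"
    using assms(2) reduced_V_subset by (intro chain_sum_subset) auto
  have DB: "chain_sum (boundary_matrix ord) B \<subseteq> {..<length ord}"
    by (rule chain_sum_subset) (auto simp: boundary_matrix_def)
  show "chain_add (chain_sum (reduced_V ord) S) (chain_sum (boundary_matrix ord) B) \<subseteq> {..<length ord}"
    using Z DB by (auto simp: chain_add_def)
  show "chain_add (chain_sum (essential_cycle ord) S) (chain_boundary (set ord) ((!) ord ` B))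
      = (!) ord ` chain_add (chain_sum (reduced_V ord) S) (chain_sum (boundary_matrix ord) B)"
    unfolding essential_cycle_chain_sum[OF assms(1,2)] chain_boundary_nth_image[OF assms(1,3)]
    using assms(1) Z DB by (intro chain_add_image) (simp_all add: inj_on_nth)
qed

section \<open>Radii of cycles and homology classes\<close>

lemma filtration_order_rv_mono:
  assumes "filtration_order K v ord" "k \<le> m" "m < length ord"
  shows "rv_simplex v (ord ! k) \<le> rv_simplex v (ord ! m)"
  using assms unfolding filtration_order_def by (meson le_less_trans not_le)

lemma rv_simplex_le_rv_chain: "finite \<xi> \<Longrightarrow> \<sigma> \<in> \<xi> \<Longrightarrow> rv_simplex v \<sigma> \<le> rv_chain v \<xi>"
  unfolding rv_chain_def by simp

lemma rv_chain_nth_image: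
  assumes "filtration_order K v ord" "m \<in> X" "X \<subseteq> {..m}" "m < length ord"
  shows "rv_chain v ((!) ord ` X) = rv_simplex v (ord ! m)"
  unfolding rv_chain_def
proof (rule Max_eqI)
  show "finite (rv_simplex v ` (!) ord ` X)"
    using finite_subset[OF assms(3)] by simp
  show "y \<le> rv_simplex v (ord ! m)" if "y \<in> rv_simplex v ` (!) ord ` X" for y
    using that assms(3) filtration_order_rv_mono[OF assms(1) _ assms(4)] by auto
  show "rv_simplex v (ord ! m) \<in> rv_simplex v ` (!) ord ` X"
    using assms(2) by blast
qed

lemma rv_essential_cycle_sum:
  assumes "filtration_order K v ord" "S \<subseteq> {..<length ord}" "S \<noteq> {}"
  shows "rv_chain v (chain_sum (essential_cycle ord) S) = rv_simplex v (ord ! Max S)"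
proof -
  have "finite S"
    using finite_subset[OF assms(2)] by simp
  then have "Max S < length ord"
    using Max_in assms(2,3) by auto
  have "chain_sum (essential_cycle ord) S = (!) ord ` chain_sum (reduced_V ord) S"
    using assms(1) essential_cycle_chain_sum[OF _ assms(2)] unfolding filtration_order_def by blast
  moreover have "Max S \<in> chain_sum (reduced_V ord) S" "chain_sum (reduced_V ord) S \<subseteq> {..Max S}"
    using unitriangular_chain_sum_Max[OF unitriangular_reduced_V \<open>finite S\<close> assms(3)] by blast+
  ultimately show ?thesis
    using rv_chain_nth_image[OF assms(1)] \<open>Max S < length ord\<close> by simp
qed

lemma rv_essential_cycle:
  assumes "filtration_order K v ord" "i < length ord"
  shows "rv_chain v (essential_cycle ord i) = rv_simplex v (ord ! i)"
  using rv_essential_cycle_sum[OF assms(1), of "{i}"] assms(2) by simp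

lemma rv_essential_cycle_sum_add_boundary_ge:
  assumes filt: "filtration_order K v ord" and S: "S \<subseteq> essential_indices ord p" "S \<noteq> {}"
    and b: "b \<subseteq> K"
  shows "rv_simplex v (ord ! Max S)
    \<le> rv_chain v (chain_add (chain_sum (essential_cycle ord) S) (chain_boundary K b))"
proof -
  let ?N = "length ord" and ?nth = "(!) ord"
  let ?X = "\<lambda>B. chain_add (chain_sum (reduced_V ord) S) (chain_sum (boundary_matrix ord) B)"
  have dist: "distinct ord" and K: "K = set ord"
    using filt unfolding filtration_order_def by auto
  have SN: "S \<subseteq> {..<?N}"
    using S(1) by (auto simp: essential_indices_def)
  then have "finite S"
    using finite_subset[OF SN] by simp
  obtain B where B: "B \<subseteq> {..<?N}" "b = ?nth ` B"
    using b unfolding K set_eq_nth_image subset_image_iff by blast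
  note image = essential_cycle_sum_add_boundary_nth_image[OF dist SN B(1)]
  have "\<forall>j<?N. reduced_R ord j \<noteq> {} \<longrightarrow> low (reduced_R ord j) \<noteq> Max S"
    using S Max_in[OF \<open>finite S\<close> S(2)] by (auto simp: essential_indices_def paired_def)
  then obtain k where k: "k \<in> ?X B" "Max S \<le> k"
    using unpaired_top_not_cancelled[OF reduced_matrices_invariant B(1) \<open>finite S\<close> S(2)] by blast
  moreover have "k < ?N"
    using k(1) image(2) by blast
  ultimately have "rv_simplex v (ord ! Max S) \<le> rv_simplex v (ord ! k)"
    by (intro filtration_order_rv_mono[OF filt])
  also have "\<dots> \<le> rv_chain v (?nth ` ?X B)"
    using k(1) finite_subset[OF image(2)] by (intro rv_simplex_le_rv_chain) auto
  finally show ?thesis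
    unfolding K B(2) image(1) .
qed

lemma chain_add_boundary_in_homology_class:
  assumes "is_cycle K p \<zeta>" "p_chain K (p + 1) c" "\<zeta> = chain_add \<xi> (chain_boundary K c)"
  shows "\<xi> \<in> homology_class K p \<zeta>"
proof -
  have \<xi>: "\<xi> = chain_add \<zeta> (chain_boundary K c)"
    using assms(3) by (auto simp: chain_add_def)
  moreover have "p_chain K p \<zeta>"
    using assms(1) unfolding is_cycle_def by blast
  ultimately have "p_chain K p \<xi>"
    using p_chain_chain_add p_chain_chain_boundary[OF assms(2)] by simp
  with \<xi> assms(2) show ?thesis
    unfolding homology_class_def by blast
qed

lemma rv_class_eqI:
  assumes "finite K" and "\<xi> \<in> homology_class K p \<zeta>"
    and "\<And>\<eta>. \<eta> \<in> homology_class K p \<zeta> \<Longrightarrow> rv_chain v \<xi> \<le> rv_chain v \<eta>"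
  shows "rv_class K p v \<zeta> = rv_chain v \<xi>"
  unfolding rv_class_def
proof (rule Min_eqI)
  have "homology_class K p \<zeta> \<subseteq> Pow K"
    by (auto simp: homology_class_def p_chain_def)
  then show "finite (rv_chain v ` homology_class K p \<zeta>)"
    using finite_subset[OF _ finite_Pow_iff[THEN iffD2, OF assms(1)]] by blast
qed (use assms(2,3) in auto)

lemma homology_class_essential_cycle_sum_ge:
  assumes filt: "filtration_order K v ord"
    and S: "S \<subseteq> essential_indices ord p" "S \<noteq> {}"
    and c: "p_chain K (p + 1) c"
    and \<zeta>: "\<zeta> = chain_add (chain_sum (essential_cycle ord) S) (chain_boundary K c)"
    and \<xi>: "\<xi> \<in> homology_class K p \<zeta>"
  shows "rv_simplex v (ord ! Max S) \<le> rv_chain v \<xi>"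
proof -
  obtain c' where c': "p_chain K (p + 1) c'" "\<xi> = chain_add \<zeta> (chain_boundary K c')"
    using \<xi> unfolding homology_class_def by blast
  have "finite K"
    using filt unfolding filtration_order_def by auto
  moreover have "c \<subseteq> K" "c' \<subseteq> K"
    using c c'(1) by (simp_all add: p_chain_def)
  ultimately have "finite c" "finite c'" "chain_add c c' \<subseteq> K"
    by (auto simp: chain_add_def finite_subset)
  then have "\<xi> = chain_add (chain_sum (essential_cycle ord) S) (chain_boundary K (chain_add c c'))"
    unfolding c'(2) \<zeta> chain_boundary_chain_add[OF \<open>finite c\<close> \<open>finite c'\<close>] by (auto simp: chain_add_def)
  then show ?thesis
    using rv_essential_cycle_sum_add_boundary_ge[OF filt S \<open>chain_add c c' \<subseteq> K\<close>] by simp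
qed

theorem mainTheorem1:
  fixes K :: "(real^'d) set set" and v :: "real^'d" and ord :: "(real^'d) set list"
    and p :: nat and \<zeta> c :: "(real^'d) set set" and S :: "nat set"
  assumes "finite_abstract_complex K"
    and "filtration_order K v ord"
    and "is_cycle K p \<zeta>"
    and "\<not> null_homologous K p \<zeta>"
    and "S \<subseteq> essential_indices ord p"
    and "p_chain K (p + 1) c"
    and "\<zeta> = chain_add (chain_sum (essential_cycle ord) S) (chain_boundary K c)"
  shows "rv_class K p v \<zeta> = rv_chain v (essential_cycle ord (Max S))
    \<and> chain_sum (essential_cycle ord) S \<in> homology_class K p \<zeta>
    \<and> rv_chain v (chain_sum (essential_cycle ord) S) = rv_class K p v \<zeta>"
proof -
  let ?\<Sigma> = "chain_sum (essential_cycle ord) S"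
  have "S \<noteq> {}"
  proof
    assume "S = {}"
    then have "\<zeta> = chain_boundary K c"
      using assms(7) by (simp add: chain_add_def)
    with assms(4,6) show False
      unfolding null_homologous_def by blast
  qed
  have SN: "S \<subseteq> {..<length ord}"
    using assms(5) by (auto simp: essential_indices_def)
  then have "Max S < length ord"
    using finite_subset[OF SN] Max_in \<open>S \<noteq> {}\<close> by auto
  have "finite K"
    using assms(2) unfolding filtration_order_def by auto
  have \<Sigma>_class: "?\<Sigma> \<in> homology_class K p \<zeta>"
    using chain_add_boundary_in_homology_class[OF assms(3,6,7)] .
  have rv_\<Sigma>: "rv_chain v ?\<Sigma> = rv_simplex v (ord ! Max S)"
    using rv_essential_cycle_sum[OF assms(2) SN \<open>S \<noteq> {}\<close>] .
  have "rv_class K p v \<zeta> = rv_chain v ?\<Sigma>"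
    using \<open>finite K\<close> \<Sigma>_class homology_class_essential_cycle_sum_ge[OF assms(2,5) \<open>S \<noteq> {}\<close> assms(6,7)] rv_\<Sigma>
    by (intro rv_class_eqI) auto
  then show ?thesis
    using \<Sigma>_class rv_\<Sigma> rv_essential_cycle[OF assms(2) \<open>Max S < length ord\<close>] by simp
qed

end
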